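(* Let $\mathrm{Tr}:\mathsf{SU}(3)\to\mathbb{C}$ be the trace map and $\Delta=\mathrm{Tr}(\mathsf{SU}(3))\subseteq\mathbb{C}$. Then $\mathrm{Tr}$ is a local submersion at almost all points of $\Delta$: for Lebesgue-almost every $z\in\Delta$, the differential of $\mathrm{Tr}$ (viewed as a map to $\mathbb{C}\cong\mathbb{R}^2$) is surjective at every point of $\mathrm{Tr}^{-1}(z)$. *)

theory Defs
  imports "HOL-Analysis.Analysis"
begin

definition adjoint_mat :: "complex^'n^'m \<Rightarrow> complex^'m^'n" where
  "adjoint_mat A = (\<chi> i j. cnj (A $ j $ i))"

definition SU3 :: "(complex^3^3) set" where
  "SU3 = {A. adjoint_mat A ** A = mat 1 \<and> det A = 1}"

text \<open>Tangent space of a subset S of a normed space at a point A: velocities at 0 of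
  curves that stay in S near 0, pass through A at time 0 and are differentiable at 0.
  For the smooth submanifold SU(3) this is the usual tangent space.\<close>
definition tangent_space :: "'a::real_normed_vector set \<Rightarrow> 'a \<Rightarrow> 'a set" where
  "tangent_space S A = {v. \<exists>\<gamma>::real \<Rightarrow> 'a. \<gamma> 0 = A \<and> (\<forall>\<^sub>F t in nhds 0. \<gamma> t \<in> S)
       \<and> (\<gamma> has_vector_derivative v) (at 0)}"

end

theory Submission
  imports Defs "HOL-Computational_Algebra.Fundamental_Theorem_Algebra"
begin

text \<open>A tangent vector of SU(3) at \<open>A\<close> is \<open>A X\<close> with \<open>X\<close> in su(3), and the differential of the
  trace maps it to \<open>tr (A X)\<close>. These values form a real subspace of \<open>\<complex>\<close>; taking for \<open>X\<close> the
  generators of the copies of su(2) in the coordinate planes shows that if it is not all of \<open>\<complex>\<close>,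
  then it lies on a line \<open>Im (c\<^sup>* z) = 0\<close>, which forces \<open>c\<^sup>* A + c A\<^sup>* = r I\<close>. Together with
  \<open>A\<^sup>* A = I\<close> this gives \<open>c\<^sup>* A\<^sup>2 - r A + c I = 0\<close>, so every eigenvalue is a root of one quadratic.
  Hence two of the three eigenvalues coincide, \<open>\<lambda>, \<lambda>, \<mu>\<close> say, with \<open>\<lambda>\<^sup>2 \<mu> = det A = 1\<close> and
  \<open>|\<lambda> \<mu>| = |c / c\<^sup>*| = 1\<close> unless \<open>\<mu> = \<lambda>\<close>; thus \<open>|\<lambda>| = 1\<close> and \<open>tr A = 2 \<lambda> + \<lambda>\<^sup>-\<^sup>2\<close> lies on the
  deltoid \<open>t \<mapsto> 2 e\<^sup>i\<^sup>t + e\<^sup>-\<^sup>2\<^sup>i\<^sup>t\<close>, a differentiable image of \<open>\<real>\<close> and hence a null set.\<close>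

section \<open>The deltoid\<close>

definition deltoid :: "real \<Rightarrow> complex" where
  "deltoid t = 2 * cis t + cis (-2 * t)"

lemma negligible_deltoid: "negligible (range deltoid)"
proof (rule negligible_differentiable_image_lowdim)
  show "DIM(real) < DIM(complex)" by simp
  have "(deltoid has_derivative (\<lambda>h. h *\<^sub>R (2 * (\<i> * cis t)) + (-2 * h) *\<^sub>R (\<i> * cis (-2 * t)))) (at t)" for t
    unfolding deltoid_def by (auto intro!: derivative_eq_intros simp: algebra_simps)
  then show "deltoid differentiable_on UNIV"
    unfolding differentiable_on_def differentiable_def by (meson has_derivative_at_withinI)
qed

lemma deltoid_Arg:
  assumes "cmod \<mu> = 1"
  shows "deltoid (Arg \<mu>) = 2 * \<mu> + 1 / \<mu>^2"
proof -
  have "\<mu> \<noteq> 0"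
    using assms by auto
  then have \<mu>: "cis (Arg \<mu>) = \<mu>"
    using assms by (simp add: cis_Arg sgn_div_norm)
  have "cis (Arg \<mu>) ^ 2 = cis (2 * Arg \<mu>)"
    using Complex.DeMoivre[of "Arg \<mu>" 2] by simp
  then have "cis (-2 * Arg \<mu>) = inverse (cis (Arg \<mu>) ^ 2)"
    by simp
  then show ?thesis
    by (simp add: deltoid_def \<mu> inverse_eq_divide)
qed

lemma double_root_sum_in_deltoid:
  fixes \<mu> \<nu> :: complex
  assumes prod: "\<mu>^2 * \<nu> = 1" and "\<nu> = \<mu> \<or> cmod (\<mu> * \<nu>) = 1"
  shows "2 * \<mu> + \<nu> \<in> range deltoid"
proof -
  have "cmod \<mu> = 1"
    using assms(2)
  proof
    assume "\<nu> = \<mu>"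
    then have "cmod \<mu> ^ 3 = 1"
      using prod by (metis norm_one norm_power power3_eq_cube power2_eq_square)
    then show ?thesis
      using power_eq_iff_eq_base[of 3 "cmod \<mu>" 1] by simp
  next
    assume "cmod (\<mu> * \<nu>) = 1"
    moreover have "cmod \<mu> * cmod (\<mu> * \<nu>) = 1"
      using prod by (metis mult.assoc norm_mult norm_one power2_eq_square)
    ultimately show ?thesis by simp
  qed
  moreover have "\<nu> = 1 / \<mu>^2"
    using prod by (metis divide_eq_eq mult.commute mult_zero_left zero_neq_one)
  ultimately show ?thesis
    by (metis deltoid_Arg rangeI)
qed

section \<open>Eigenvalues of a unitary matrix with a scalar Hermitian part\<close>

lemma quadratic_distinct_roots_Vieta:
  fixes a b c u v :: "'a::field"
  assumes "u \<noteq> v" "a * u^2 - b * u + c = 0" "a * v^2 - b * v + c = 0"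
  shows "a * (u + v) = b" "a * (u * v) = c"
proof -
  have "(u - v) * (a * (u + v) - b) = (a * u^2 - b * u + c) - (a * v^2 - b * v + c)"
    by (simp add: algebra_simps power2_eq_square)
  then show sum: "a * (u + v) = b"
    using assms by simp
  show "a * (u * v) = c"
    using assms(2) unfolding sum[symmetric] by (simp add: algebra_simps power2_eq_square)
qed

lemma roots_sum_in_deltoid:
  fixes c r w1 w2 w3 :: complex
  assumes "c \<noteq> 0" and root: "\<And>w. w \<in> {w1, w2, w3} \<Longrightarrow> cnj c * w^2 - r * w + c = 0"
    and prod: "w1 * w2 * w3 = 1"
  shows "w1 + w2 + w3 \<in> range deltoid"
proof -
  have double: "2 * \<mu> + \<nu> \<in> range deltoid"
    if "\<mu> \<in> {w1, w2, w3}" "\<nu> \<in> {w1, w2, w3}" "\<mu>^2 * \<nu> = 1" for \<mu> \<nu>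
  proof (rule double_root_sum_in_deltoid[OF that(3)])
    show "\<nu> = \<mu> \<or> cmod (\<mu> * \<nu>) = 1"
    proof (cases "\<nu> = \<mu>")
      case False
      then have "cnj c * (\<mu> * \<nu>) = c"
        using quadratic_distinct_roots_Vieta(2) root that(1,2) by metis
      then have "cmod (cnj c) * cmod (\<mu> * \<nu>) = cmod c"
        by (metis norm_mult)
      then show ?thesis
        using \<open>c \<noteq> 0\<close> by simp
    qed simp
  qed
  have "w1 = w2 \<or> w1 = w3 \<or> w2 = w3"
  proof (rule ccontr)
    assume "\<not> ?thesis"
    then have "cnj c * (w1 + w2) = r" "cnj c * (w1 + w3) = r"
      using quadratic_distinct_roots_Vieta(1) root by (metis insertCI)+
    then have "w2 = w3"
      using \<open>c \<noteq> 0\<close> by (metis add_left_cancel complex_cnj_zero_iff mult_cancel_left)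
    with \<open>\<not> ?thesis\<close> show False by simp
  qed
  then consider "w1 = w2" | "w1 = w3" | "w2 = w3"
    by blast
  then show ?thesis
  proof cases
    case 1
    then show ?thesis using double[of w1 w3] prod by (simp add: power2_eq_square)
  next
    case 2
    then show ?thesis using double[of w1 w2] prod by (simp add: power2_eq_square ac_simps)
  next
    case 3
    then show ?thesis using double[of w2 w1] prod by (simp add: power2_eq_square ac_simps)
  qed
qed

lemma monic_cubic_roots_Vieta:
  fixes a0 a1 a2 :: complex
  shows "\<exists>w1 w2 w3. w1 + w2 + w3 = -a2 \<and> w1 * w2 + w1 * w3 + w2 * w3 = a1 \<and> w1 * w2 * w3 = -a0"
proof -
  obtain w where "smult (lead_coeff [:a0, a1, a2, 1:]) (\<Prod>i<degree [:a0, a1, a2, 1:]. [:-w i, 1:])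
      = [:a0, a1, a2, 1:]"
    by (rule complex_poly_decompose')
  then have "[:-w 0, 1:] * [:-w 1, 1:] * [:-w 2, 1:] = [:a0, a1, a2, 1:]"
    by (simp add: numeral_3_eq_3 numeral_2_eq_2 lessThan_Suc mult_ac)
  moreover have "u + v + x = -a2 \<and> u * v + u * x + v * x = a1 \<and> u * v * x = -a0"
    if "[:-u, 1:] * [:-v, 1:] * [:-x, 1:] = [:a0, a1, a2, 1:]" for u v x
    using that by (auto simp: algebra_simps minus_equation_iff[of u])
  ultimately show ?thesis by blast
qed

lemma complex_3x3_eigenvalues:
  fixes A :: "complex^3^3"
  obtains w1 w2 w3 where "trace A = w1 + w2 + w3" "det A = w1 * w2 * w3"
    "\<And>x. det (A - mat x) = (w1 - x) * (w2 - x) * (w3 - x)"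
proof -
  define e where "e = A$1$1 * A$2$2 - A$1$2 * A$2$1 + A$1$1 * A$3$3 - A$1$3 * A$3$1
    + A$2$2 * A$3$3 - A$2$3 * A$3$2"
  have char_poly: "det (A - mat x) = - (x^3 - trace A * x^2 + e * x - det A)" for x
    by (simp add: e_def det_3 mat_def trace_def sum_3 algebra_simps power2_eq_square power3_eq_cube)
  obtain w1 w2 w3 where w: "w1 + w2 + w3 = trace A" "w1 * w2 + w1 * w3 + w2 * w3 = e" "w1 * w2 * w3 = det A"
    using monic_cubic_roots_Vieta[of "- trace A" e "- det A"] by auto
  show thesis
  proof (rule that)
    show "det (A - mat x) = (w1 - x) * (w2 - x) * (w3 - x)" for x
      unfolding char_poly w[symmetric] by (simp add: algebra_simps power2_eq_square power3_eq_cube)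
  qed (use w in auto)
qed

lemma det_mat: "det (mat x :: 'a::comm_ring_1^'n^'n) = x ^ CARD('n)"
  by (simp add: det_diagonal mat_def)

lemma eigenvalue_root_of_annihilating_quadratic:
  fixes A :: "'a::idom^'n^'n"
  assumes annihilates: "\<And>p q. a * (A ** A)$p$q - b * A$p$q + (if p = q then c else 0) = 0"
    and eigen: "det (A - mat w) = 0"
  shows "a * w^2 - b * w + c = 0"
proof -
  \<comment> \<open>\<open>(A - w I) (a A + (a w - b) I) = a A\<^sup>2 - b A - (a w\<^sup>2 - b w) I\<close>\<close>
  define L :: "'a^'n^'n" where "L = (\<chi> p q. a * A$p$q + (if p = q then a * w - b else 0))"
  have "((A - mat w) ** L)$p$q = - (if p = q then a * w^2 - b * w + c else 0)" for p q
  proof -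
    have "((A - mat w) ** L)$p$q = (A ** L)$p$q - w * L$p$q"
      unfolding matrix_matrix_mult_def mat_def by (simp add: left_diff_distrib sum_subtractf mult_delta_left)
    also have "(A ** L)$p$q = a * (A ** A)$p$q + (a * w - b) * A$p$q"
      unfolding matrix_matrix_mult_def L_def
      by (simp add: distrib_left sum.distrib sum_distrib_left mult_delta_right mult_ac)
    also have "L$p$q = a * A$p$q + (if p = q then a * w - b else 0)"
      by (simp add: L_def)
    finally have "((A - mat w) ** L)$p$q
        = (a * (A ** A)$p$q - b * A$p$q) - (if p = q then a * w^2 - b * w else 0)"
      by (cases "p = q") (simp_all add: algebra_simps power2_eq_square)
    moreover have "a * (A ** A)$p$q - b * A$p$q = - (if p = q then c else 0)"
      using annihilates[of p q] by (simp add: eq_neg_iff_add_eq_0)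
    ultimately show ?thesis
      by simp
  qed
  then have "(A - mat w) ** L = mat (- (a * w^2 - b * w + c))"
    by (simp add: vec_eq_iff mat_def)
  then have "(- (a * w^2 - b * w + c)) ^ CARD('n) = 0"
    by (metis det_mul det_mat eigen mult_zero_left)
  then show ?thesis by (simp add: algebra_simps)
qed

lemma unitary_annihilating_quadratic:
  fixes A :: "complex^'n^'n"
  assumes unitary: "adjoint_mat A ** A = mat 1"
    and scalar: "\<And>p q. cnj c * A$p$q + c * cnj (A$q$p) = (if p = q then r else 0)"
  shows "cnj c * (A ** A)$p$q - r * A$p$q + (if p = q then c else 0) = 0"
proof -
  have "cnj c * (A ** A)$p$q + c * (\<Sum>l\<in>UNIV. cnj (A$l$p) * A$l$q)
      = (\<Sum>l\<in>UNIV. (cnj c * A$p$l + c * cnj (A$l$p)) * A$l$q)"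
    by (simp add: matrix_matrix_mult_def algebra_simps sum.distrib sum_distrib_left)
  also have "\<dots> = r * A$p$q"
    by (simp add: scalar if_distrib[of "\<lambda>x. x * _"] cong: if_cong)
  moreover have "(\<Sum>l\<in>UNIV. cnj (A$l$p) * A$l$q) = (if p = q then 1 else 0)"
    using unitary by (simp add: vec_eq_iff matrix_matrix_mult_def adjoint_mat_def mat_def)
  ultimately show ?thesis
    by (cases "p = q") (simp_all add: algebra_simps)
qed

lemma SU3_trace_in_deltoid:
  assumes "A \<in> SU3" and "c \<noteq> 0"
    and scalar: "\<And>p q. cnj c * A$p$q + c * cnj (A$q$p) = (if p = q then r else 0)"
  shows "trace A \<in> range deltoid"
proof -
  have unitary: "adjoint_mat A ** A = mat 1" and "det A = 1"
    using \<open>A \<in> SU3\<close> by (auto simp: SU3_def)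
  obtain w1 w2 w3 where w: "trace A = w1 + w2 + w3" "det A = w1 * w2 * w3"
    and char_poly: "\<And>x. det (A - mat x) = (w1 - x) * (w2 - x) * (w3 - x)"
    using complex_3x3_eigenvalues[of A] by blast
  have roots: "cnj c * w^2 - r * w + c = 0" if "w \<in> {w1, w2, w3}" for w
    by (rule eigenvalue_root_of_annihilating_quadratic[OF unitary_annihilating_quadratic[OF unitary scalar]])
      (use that char_poly in auto)
  have "w1 + w2 + w3 \<in> range deltoid"
    by (rule roots_sum_in_deltoid[OF \<open>c \<noteq> 0\<close> roots]) (use w \<open>det A = 1\<close> in auto)
  with w show ?thesis
    by simp
qed

section \<open>Tangent spaces of matrix groups\<close>

lemma bounded_bilinear_matrix_matrix_mult:
  "bounded_bilinear ((**) :: 'a::{euclidean_space,real_algebra_1,comm_ring_1}^'n^'m \<Rightarrow> 'a^'k^'n \<Rightarrow> 'a^'k^'m)"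
  unfolding bilinear_conv_bounded_bilinear[symmetric] bilinear_def linear_iff
  by (simp add: matrix_matrix_mult_def vec_eq_iff scaleR_sum_right sum.distrib algebra_simps)

lemma has_vector_derivative_vec_nth_iff:
  fixes f :: "real \<Rightarrow> 'a::real_normed_vector^'n"
  shows "(f has_vector_derivative f') F \<longleftrightarrow> (\<forall>i. ((\<lambda>t. f t $ i) has_vector_derivative f' $ i) F)"
proof
  assume "(f has_vector_derivative f') F"
  then show "\<forall>i. ((\<lambda>t. f t $ i) has_vector_derivative f' $ i) F"
    using bounded_linear.has_vector_derivative[OF bounded_linear_vec_nth] by blast
next
  assume components: "\<forall>i. ((\<lambda>t. f t $ i) has_vector_derivative f' $ i) F"
  show "(f has_vector_derivative f') F"
    unfolding has_vector_derivative_def has_derivative_def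
  proof (intro conjI bounded_linear_scaleR_left vec_tendstoI)
    fix i
    show "((\<lambda>y. ((f y - f (Lim F (\<lambda>x. x)) - (y - Lim F (\<lambda>x. x)) *\<^sub>R f') /\<^sub>R norm (y - Lim F (\<lambda>x. x))) $ i)
        \<longlongrightarrow> 0 $ i) F"
      using components unfolding has_vector_derivative_def has_derivative_def by simp
  qed
qed

lemma zero_in_tangent_space: "A \<in> S \<Longrightarrow> 0 \<in> tangent_space S A"
  unfolding tangent_space_def by (intro CollectI exI[of _ "\<lambda>_. A"]) auto

lemma tangent_space_scaleR:
  assumes "v \<in> tangent_space S A"
  shows "c *\<^sub>R v \<in> tangent_space S A"
proof -
  obtain \<gamma> where \<gamma>: "\<gamma> 0 = A" "\<forall>\<^sub>F t in nhds 0. \<gamma> t \<in> S" "(\<gamma> has_vector_derivative v) (at 0)"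
    using assms unfolding tangent_space_def by blast
  have "filterlim (\<lambda>t. c * t) (nhds 0) (nhds 0)"
    using tendsto_mult_left[OF filterlim_ident, of c "0::real"] by simp
  then have "\<forall>\<^sub>F t in nhds 0. \<gamma> (c * t) \<in> S"
    using \<gamma>(2) by (rule eventually_compose_filterlim[rotated])
  moreover have "((\<lambda>t. \<gamma> (c * t)) has_vector_derivative c *\<^sub>R v) (at 0)"
  proof -
    have "((\<lambda>t. c * t) has_vector_derivative c) (at 0)"
      by (auto intro!: derivative_eq_intros simp flip: has_real_derivative_iff_has_vector_derivative)
    then show ?thesis
      using vector_diff_chain_at[of "\<lambda>t. c * t" c 0 \<gamma> v] \<gamma>(3) by (simp add: o_def)
  qed
  ultimately show ?thesis
    unfolding tangent_space_def using \<gamma>(1) by (intro CollectI exI[of _ "\<lambda>t. \<gamma> (c * t)"]) auto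
qed

lemma tangent_space_matrix_mult:
  fixes S :: "('a::{euclidean_space,real_algebra_1,comm_ring_1}^'n^'n) set"
  assumes closed: "\<And>X Y. X \<in> S \<Longrightarrow> Y \<in> S \<Longrightarrow> X ** Y \<in> S"
    and "u \<in> tangent_space S A" "v \<in> tangent_space S B"
  shows "A ** v + u ** B \<in> tangent_space S (A ** B)"
proof -
  obtain \<gamma> where \<gamma>: "\<gamma> 0 = A" "\<forall>\<^sub>F t in nhds 0. \<gamma> t \<in> S" "(\<gamma> has_vector_derivative u) (at 0)"
    using assms(2) unfolding tangent_space_def by blast
  obtain \<delta> where \<delta>: "\<delta> 0 = B" "\<forall>\<^sub>F t in nhds 0. \<delta> t \<in> S" "(\<delta> has_vector_derivative v) (at 0)"
    using assms(3) unfolding tangent_space_def by blast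
  have "\<forall>\<^sub>F t in nhds 0. \<gamma> t ** \<delta> t \<in> S"
    using \<gamma>(2) \<delta>(2) by eventually_elim (rule closed)
  moreover have "((\<lambda>t. \<gamma> t ** \<delta> t) has_vector_derivative A ** v + u ** B) (at 0)"
    using bounded_bilinear.has_vector_derivative[OF bounded_bilinear_matrix_matrix_mult \<gamma>(3) \<delta>(3)]
    by (simp add: \<gamma>(1) \<delta>(1))
  ultimately show ?thesis
    using \<gamma>(1) \<delta>(1) unfolding tangent_space_def by auto
qed

lemma adjoint_mat_matrix_mult: "adjoint_mat (A ** B) = adjoint_mat B ** adjoint_mat (A :: complex^'n^'m)"
  by (simp add: adjoint_mat_def matrix_matrix_mult_def vec_eq_iff mult.commute)

lemma SU3_matrix_mult:
  assumes "A \<in> SU3" "B \<in> SU3"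
  shows "A ** B \<in> SU3"
proof -
  have "adjoint_mat (A ** B) ** (A ** B) = adjoint_mat B ** (adjoint_mat A ** A) ** B"
    by (simp add: adjoint_mat_matrix_mult matrix_mul_assoc)
  then show ?thesis
    using assms by (simp add: SU3_def det_mul)
qed

lemma identity_in_SU3: "mat 1 \<in> SU3"
proof -
  have "adjoint_mat (mat 1) = (mat 1 :: complex^3^3)"
    by (simp add: adjoint_mat_def mat_def vec_eq_iff)
  then show ?thesis
    by (simp add: SU3_def)
qed

lemma subspace_tangent_space_SU3: "subspace (tangent_space SU3 (mat 1))"
proof (rule subspaceI)
  show "0 \<in> tangent_space SU3 (mat 1)"
    by (rule zero_in_tangent_space[OF identity_in_SU3])
  show "u + v \<in> tangent_space SU3 (mat 1)"
    if "u \<in> tangent_space SU3 (mat 1)" "v \<in> tangent_space SU3 (mat 1)" for u v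
    using tangent_space_matrix_mult[OF SU3_matrix_mult that(2,1)] by (simp add: add.commute)
  show "c *\<^sub>R u \<in> tangent_space SU3 (mat 1)" if "u \<in> tangent_space SU3 (mat 1)" for c u
    using that by (rule tangent_space_scaleR)
qed

lemma tangent_space_SU3_left_translate:
  assumes "A \<in> SU3" "X \<in> tangent_space SU3 (mat 1)"
  shows "A ** X \<in> tangent_space SU3 A"
  using tangent_space_matrix_mult[OF SU3_matrix_mult zero_in_tangent_space[OF assms(1)] assms(2)]
  by simp

section \<open>The differential of the trace on SU(3)\<close>

text \<open>For \<open>d = 1\<close> and \<open>|a|\<^sup>2 + |b|\<^sup>2 = 1\<close>, the SU(2) matrix \<open>[[a, b], [-b\<^sup>*, a\<^sup>*]]\<close> acting on the
  coordinates \<open>j, k\<close>; for \<open>d = 0\<close>, the corresponding tangent vector in su(3).\<close>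
definition su2_block :: "complex \<Rightarrow> 3 \<Rightarrow> 3 \<Rightarrow> complex \<Rightarrow> complex \<Rightarrow> complex^3^3" where
  "su2_block d j k a b = (\<chi> p q.
     if p = j \<and> q = j then a else if p = k \<and> q = k then cnj a
     else if p = j \<and> q = k then b else if p = k \<and> q = j then - cnj b
     else if p = q then d else 0)"

lemma su2_block_in_SU3:
  assumes "j \<noteq> k" "cnj a * a + cnj b * b = 1"
  shows "su2_block 1 j k a b \<in> SU3"
proof -
  have unit: "cnj a * a + b * cnj b = 1" "a * cnj a + cnj b * b = 1" "a * cnj a + b * cnj b = 1"
    "cnj b * b + cnj a * a = 1" "cnj b * b + a * cnj a = 1" "b * cnj b + cnj a * a = 1"
    "b * cnj b + a * cnj a = 1"
    using assms(2) by (simp_all add: ac_simps)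
  have "(j, k) \<in> {(1, 2), (2, 1), (1, 3), (3, 1), (2, 3), (3, 2)}"
    using assms(1) exhaust_3[of j] exhaust_3[of k] by auto
  then show ?thesis
    by (elim insertE emptyE; simp add: SU3_def adjoint_mat_def vec_eq_iff forall_3
        matrix_matrix_mult_def sum_3 mat_def su2_block_def det_3 assms(2) unit)
qed

lemma su2_block_identity:
  assumes "j \<noteq> k"
  shows "su2_block 1 j k 1 0 = mat 1"
proof -
  have "su2_block 1 j k 1 0 $ p $ q = mat 1 $ p $ q" for p q
    unfolding su2_block_def mat_def vec_lambda_beta using assms
    by (cases "p = j"; cases "q = j"; cases "p = k"; cases "q = k") simp_all
  then show ?thesis
    by (simp add: vec_eq_iff)
qed

lemma has_vector_derivative_su2_block:
  assumes "(\<alpha> has_vector_derivative a) (at x within S)" "(\<beta> has_vector_derivative b) (at x within S)"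
  shows "((\<lambda>t. su2_block d j k (\<alpha> t) (\<beta> t)) has_vector_derivative su2_block 0 j k a b) (at x within S)"
proof -
  have if_rule: "((\<lambda>t. if P then f t else g t) has_vector_derivative (if P then f' else g')) F"
    if "(f has_vector_derivative f') F" "(g has_vector_derivative g') F" for P f g f' g' and F
    using that by simp
  show ?thesis
    unfolding has_vector_derivative_vec_nth_iff su2_block_def vec_lambda_beta
    by (intro allI if_rule has_vector_derivative_cnj has_vector_derivative_minus
        has_vector_derivative_const assms)
qed

lemma su2_block_in_tangent_space_SU3:
  assumes "j \<noteq> k" "\<alpha> 0 = 1" "\<beta> 0 = 0" "\<And>t. cnj (\<alpha> t) * \<alpha> t + cnj (\<beta> t) * \<beta> t = 1"
    "(\<alpha> has_vector_derivative a) (at 0)" "(\<beta> has_vector_derivative b) (at 0)"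
  shows "su2_block 0 j k a b \<in> tangent_space SU3 (mat 1)"
  unfolding tangent_space_def
  using assms su2_block_in_SU3 su2_block_identity has_vector_derivative_su2_block
  by (intro CollectI exI[of _ "\<lambda>t. su2_block 1 j k (\<alpha> t) (\<beta> t)"]) auto

lemma su2_block_generators_in_tangent_space_SU3:
  assumes "j \<noteq> k"
  shows "su2_block 0 j k \<i> 0 \<in> tangent_space SU3 (mat 1)"
    and "su2_block 0 j k 0 1 \<in> tangent_space SU3 (mat 1)"
    and "su2_block 0 j k 0 \<i> \<in> tangent_space SU3 (mat 1)"
proof -
  have unit: "cos t * cos t + sin t * sin t = 1" for t :: real
    by (metis sin_cos_squared_add3 add.commute)
  have cis: "(cis has_vector_derivative \<i>) (at 0)"
    unfolding has_vector_derivative_def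
    by (auto intro!: derivative_eq_intros)
  have cos: "((\<lambda>t. complex_of_real (cos t)) has_vector_derivative 0) (at 0)"
    using has_vector_derivative_of_real[OF DERIV_cos[of "0::real"]] by simp
  have sin: "((\<lambda>t. complex_of_real (sin t)) has_vector_derivative 1) (at 0)"
    using has_vector_derivative_of_real[OF DERIV_sin[of "0::real"]] by simp
  show "su2_block 0 j k \<i> 0 \<in> tangent_space SU3 (mat 1)"
    by (rule su2_block_in_tangent_space_SU3[OF assms _ _ _ cis has_vector_derivative_const[of 0]])
      (auto simp: complex_eq_iff)
  show "su2_block 0 j k 0 1 \<in> tangent_space SU3 (mat 1)"
    by (rule su2_block_in_tangent_space_SU3[OF assms _ _ _ cos sin]) (auto simp: complex_eq_iff unit)
  have i_sin: "((\<lambda>t. \<i> * complex_of_real (sin t)) has_vector_derivative \<i>) (at 0)"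
    using has_vector_derivative_mult_right[OF sin, where a = \<i>] by simp
  show "su2_block 0 j k 0 \<i> \<in> tangent_space SU3 (mat 1)"
    by (rule su2_block_in_tangent_space_SU3[OF assms _ _ _ cos i_sin]) (auto simp: complex_eq_iff unit)
qed

lemma trace_matrix_mult_su2_block:
  "j \<noteq> k \<Longrightarrow> trace (A ** su2_block 0 j k a b) = a * A$j$j + cnj a * A$k$k + b * A$k$j - cnj b * A$j$k"
  using exhaust_3[of j] exhaust_3[of k]
  by (auto simp: trace_def su2_block_def matrix_matrix_mult_def sum_3 algebra_simps)

lemma complex_eq_Im_combination:
  fixes v w z :: complex
  assumes "Im (cnj v * w) \<noteq> 0"
  shows "z = (Im (cnj z * w) *\<^sub>R v + Im (cnj v * z) *\<^sub>R w) /\<^sub>R Im (cnj v * w)"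
proof -
  have "Im (cnj v * w) *\<^sub>R z = Im (cnj z * w) *\<^sub>R v + Im (cnj v * z) *\<^sub>R w"
    by (simp add: complex_eq_iff algebra_simps)
  then show ?thesis
    using assms by (metis scaleR_scaleR left_inverse scaleR_one)
qed

lemma complex_subspace_in_line:
  fixes M :: "complex set"
  assumes "subspace M" "M \<noteq> UNIV"
  obtains c where "c \<noteq> 0" "\<And>v. v \<in> M \<Longrightarrow> Im (cnj c * v) = 0"
proof (cases "M \<subseteq> {0}")
  case True
  show ?thesis
  proof (rule that[of 1])
    show "Im (cnj 1 * v) = 0" if "v \<in> M" for v
      using True that by auto
  qed simp
next
  case False
  then obtain c where "c \<in> M" "c \<noteq> 0"
    by auto
  moreover have "Im (cnj c * v) = 0" if "v \<in> M" for v
  proof (rule ccontr)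
    assume "Im (cnj c * v) \<noteq> 0"
    then have "z \<in> M" for z
      using complex_eq_Im_combination[of c v z] \<open>c \<in> M\<close> \<open>v \<in> M\<close> \<open>subspace M\<close>
      by (metis subspace_add subspace_scale)
    with \<open>M \<noteq> UNIV\<close> show False
      by auto
  qed
  ultimately show ?thesis
    using that by blast
qed

lemma cnj_mult_plus_adjoint_scalar:
  fixes A :: "complex^'n^'n"
  assumes gen_diag: "\<And>j k. j \<noteq> k \<Longrightarrow> Im (cnj c * (\<i> * (A$j$j - A$k$k))) = 0"
    and gen_real: "\<And>j k. j \<noteq> k \<Longrightarrow> Im (cnj c * (A$k$j - A$j$k)) = 0"
    and gen_imag: "\<And>j k. j \<noteq> k \<Longrightarrow> Im (cnj c * (\<i> * (A$k$j + A$j$k))) = 0"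
  obtains r where "\<And>p q. cnj c * A$p$q + c * cnj (A$q$p) = (if p = q then r else 0)"
proof -
  define B where "B = (\<lambda>p q. cnj c * A$p$q)"
  have "cnj c * A$p$q + c * cnj (A$q$p) = (if p = q then of_real (2 * Re (B undefined undefined)) else 0)"
    for p q
  proof -
    have "Re (B p p) = Re (B undefined undefined)"
      using gen_diag[of p undefined] by (cases "p = undefined") (simp_all add: B_def algebra_simps)
    moreover have "Re (B q p) = - Re (B p q)" "Im (B q p) = Im (B p q)" if "p \<noteq> q"
      using gen_real[OF that] gen_imag[OF that] by (simp_all add: B_def algebra_simps)
    ultimately show ?thesis
      by (auto simp: B_def complex_eq_iff)
  qed
  then show thesis
    by (rule that)
qed

lemma SU3_scalar_if_trace_tangent_space_ne_UNIV:
  assumes "A \<in> SU3" and "trace ` tangent_space SU3 A \<noteq> UNIV"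
  obtains c r where "c \<noteq> 0" "\<And>p q. cnj c * A$p$q + c * cnj (A$q$p) = (if p = q then r else 0)"
proof -
  define M where "M = (\<lambda>X. trace (A ** X)) ` tangent_space SU3 (mat 1)"
  have "linear (\<lambda>X. trace (A ** X))"
    by (rule linearI) (simp add: matrix_add_ldistrib trace_add,
        simp add: bounded_bilinear.scaleR_right[OF bounded_bilinear_matrix_matrix_mult] trace_def scaleR_sum_right)
  then have "subspace M"
    unfolding M_def by (rule linear_subspace_image[OF _ subspace_tangent_space_SU3])
  moreover have "M \<subseteq> trace ` tangent_space SU3 A"
    unfolding M_def using tangent_space_SU3_left_translate[OF \<open>A \<in> SU3\<close>] by auto
  ultimately obtain c where "c \<noteq> 0" and line: "\<And>v. v \<in> M \<Longrightarrow> Im (cnj c * v) = 0"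
    using complex_subspace_in_line assms(2) by blast
  have in_M: "trace (A ** su2_block 0 j k a b) \<in> M"
    if "su2_block 0 j k a b \<in> tangent_space SU3 (mat 1)" for j k a b
    using that unfolding M_def by blast
  have gen_diag: "Im (cnj c * (\<i> * (A$j$j - A$k$k))) = 0" if "j \<noteq> k" for j k
    using line[OF in_M[OF su2_block_generators_in_tangent_space_SU3(1)[OF that]]]
    by (simp add: trace_matrix_mult_su2_block[OF that] algebra_simps)
  have gen_real: "Im (cnj c * (A$k$j - A$j$k)) = 0" if "j \<noteq> k" for j k
    using line[OF in_M[OF su2_block_generators_in_tangent_space_SU3(2)[OF that]]]
    by (simp add: trace_matrix_mult_su2_block[OF that])
  have gen_imag: "Im (cnj c * (\<i> * (A$k$j + A$j$k))) = 0" if "j \<noteq> k" for j k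
    using line[OF in_M[OF su2_block_generators_in_tangent_space_SU3(3)[OF that]]]
    by (simp add: trace_matrix_mult_su2_block[OF that] algebra_simps)
  obtain r where "\<And>p q. cnj c * A$p$q + c * cnj (A$q$p) = (if p = q then r else 0)"
    using cnj_mult_plus_adjoint_scalar[OF gen_diag gen_real gen_imag] by blast
  with \<open>c \<noteq> 0\<close> show thesis
    by (rule that)
qed

lemma trace_tangent_space_SU3_eq_UNIV:
  assumes "A \<in> SU3" "trace A \<notin> range deltoid"
  shows "trace ` tangent_space SU3 A = UNIV"
proof (rule ccontr)
  assume "trace ` tangent_space SU3 A \<noteq> UNIV"
  then obtain c r where "c \<noteq> 0" "\<And>p q. cnj c * A$p$q + c * cnj (A$q$p) = (if p = q then r else 0)"
    using SU3_scalar_if_trace_tangent_space_ne_UNIV[OF assms(1)] by blast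
  then have "trace A \<in> range deltoid"
    by (rule SU3_trace_in_deltoid[OF assms(1)])
  with assms(2) show False
    by simp
qed

theorem proposition6p1:
  shows "AE z in lebesgue. z \<in> trace ` SU3 \<longrightarrow>
           (\<forall>A\<in>SU3. trace A = z \<longrightarrow> trace ` tangent_space SU3 A = (UNIV :: complex set))"
proof -
  have "AE z in lebesgue. z \<notin> range deltoid"
    using negligible_deltoid by (auto intro: AE_I' simp: negligible_iff_null_sets)
  then show ?thesis
    by eventually_elim (use trace_tangent_space_SU3_eq_UNIV in blast)
qed

end
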